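(* Let $\Gamma$ be a countable bounded abelian group that does not have property $(\ast)$. Then any Hausdorff topological group $G$ in which $\Gamma$ can be embedded as a dense subgroup has a non-trivial open subgroup of finite index.
   Context: An abelian group is bounded if the orders of its elements are bounded. By Prüfer's theorem a bounded countable abelian group is a direct sum of finite cyclic groups; $m_\Gamma(p^n)\in\mathbb{N}\cup\{\infty\}$ denotes the number of summands isomorphic to $\mathbb{Z}/p^n\mathbb{Z}$ ($p$ prime, $n\ge1$). $\Gamma$ has property $(\ast)$ if for all primes $p$ and $n\ge1$, $m_\Gamma(p^n)>0$ implies there is $k\ge n$ with $m_\Gamma(p^k)=\infty$. *)

theory Defs
  imports "HOL-Analysis.Analysis" "HOL-Algebra.Algebra"
begin

definition topological_group :: "('a, 'b) monoid_scheme \<Rightarrow> 'a topology \<Rightarrow> bool" where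
  "topological_group G T \<longleftrightarrow>
     group G \<and> topspace T = carrier G \<and>
     continuous_map (prod_topology T T) T (\<lambda>(x, y). x \<otimes>\<^bsub>G\<^esub> y) \<and>
     continuous_map T T (\<lambda>x. inv\<^bsub>G\<^esub> x)"

definition bounded_group :: "('g, 'c) monoid_scheme \<Rightarrow> bool" where
  "bounded_group \<Gamma> \<longleftrightarrow>
     (\<exists>N::nat. \<forall>x\<in>carrier \<Gamma>. \<exists>n::nat. 0 < n \<and> n \<le> N \<and> x [^]\<^bsub>\<Gamma>\<^esub> n = \<one>\<^bsub>\<Gamma>\<^esub>)"

definition pruefer_decomposition :: "('g, 'c) monoid_scheme \<Rightarrow> 'g set \<Rightarrow> bool" where
  "pruefer_decomposition \<Gamma> B \<longleftrightarrow>
     B \<subseteq> carrier \<Gamma> \<and>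
     (\<forall>b\<in>B. \<exists>p n. Factorial_Ring.prime (p::nat) \<and> n \<ge> 1 \<and> group.ord \<Gamma> b = p ^ n) \<and>
     (\<forall>x\<in>carrier \<Gamma>. \<exists>!a::'g \<Rightarrow> nat.
         (\<forall>b. b \<notin> B \<longrightarrow> a b = 0) \<and> (\<forall>b\<in>B. a b < group.ord \<Gamma> b) \<and>
         finite {b. a b \<noteq> 0} \<and>
         x = finprod \<Gamma> (\<lambda>b. b [^]\<^bsub>\<Gamma>\<^esub> a b) {b. a b \<noteq> 0})"

definition summand_mult :: "('g, 'c) monoid_scheme \<Rightarrow> 'g set \<Rightarrow> nat \<Rightarrow> enat" where
  "summand_mult \<Gamma> B q =
     (let S = {b\<in>B. group.ord \<Gamma> b = q} in if finite S then enat (card S) else \<infinity>)"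

text \<open>Property (*). The multiplicities do not depend on the decomposition; we define
  (*) as: the multiplicities of every Pruefer decomposition satisfy the condition.\<close>
definition property_star :: "('g, 'c) monoid_scheme \<Rightarrow> bool" where
  "property_star \<Gamma> \<longleftrightarrow>
     (\<forall>B. pruefer_decomposition \<Gamma> B \<longrightarrow>
        (\<forall>p n. Factorial_Ring.prime (p::nat) \<and> n \<ge> 1 \<and> summand_mult \<Gamma> B (p ^ n) > 0 \<longrightarrow>
           (\<exists>k\<ge>n. summand_mult \<Gamma> B (p ^ k) = \<infinity>)))"

end

theory Submission
  imports Defs
begin

text \<open>Choose a Pruefer decomposition of \<open>\<Gamma>\<close> with a summand of order \<open>p^n\<close> such that only
  finitely many summands have order \<open>p^k\<close>, \<open>k \<ge> n\<close>, and let \<open>N\<close> bound the orders. The exponent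
  \<open>e = p^(n-1) m\<close>, with \<open>m\<close> the product of all \<open>d \<le> N\<close> prime to \<open>p\<close>, kills all but those
  finitely many summands, so \<open>\<Gamma>\<^sup>e\<close> is finite, but it does not kill the summand of order \<open>p^n\<close>.
  In \<open>G\<close>, which is abelian since \<open>\<Gamma>\<close> is dense, \<open>H = {x. x^e = 1}\<close> is a closed subgroup.
  The coset \<open>H f(x)\<close> only depends on \<open>x^e\<close>, so finitely many closed cosets cover the dense
  set \<open>f(\<Gamma>)\<close> and hence all of \<open>G\<close>: \<open>H\<close> has finite index, is open as the complement of
  finitely many closed cosets, and is proper because it misses \<open>f(b)\<close> for a generator \<open>b\<close>
  of order \<open>p^n\<close>.\<close>

lemma continuous_map_group_mult:
  assumes "topological_group G T" "continuous_map Z T g" "continuous_map Z T h"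
  shows "continuous_map Z T (\<lambda>x. g x \<otimes>\<^bsub>G\<^esub> h x)"
proof -
  have "continuous_map (prod_topology T T) T (\<lambda>(x, y). x \<otimes>\<^bsub>G\<^esub> y)"
    using assms(1) unfolding topological_group_def by blast
  from continuous_map_compose[OF continuous_map_pairedI[OF assms(2,3)] this]
  show ?thesis by (simp add: o_def)
qed

lemma continuous_map_group_pow:
  assumes "topological_group G T"
  shows "continuous_map T T (\<lambda>x. x [^]\<^bsub>G\<^esub> (n::nat))"
proof (induction n)
  case 0
  from assms have "\<one>\<^bsub>G\<^esub> \<in> topspace T"
    unfolding topological_group_def by (metis group.is_monoid monoid.one_closed)
  then show ?case by simp
next
  case (Suc n)
  from assms have "group G" and "topspace T = carrier G"
    unfolding topological_group_def by auto
  moreover have "continuous_map T T (\<lambda>x. x [^]\<^bsub>G\<^esub> n \<otimes>\<^bsub>G\<^esub> x)"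
    using continuous_map_group_mult[OF assms Suc continuous_map_id[unfolded id_def]] .
  ultimately show ?case
    by (metis (no_types, lifting) continuous_map_eq group.is_monoid monoid.nat_pow_Suc)
qed

lemma comm_group_if_dense_commuting:
  assumes "topological_group G T" "Hausdorff_space T"
    and "T closure_of D = topspace T" "D \<subseteq> carrier G"
    and "\<And>x y. x \<in> D \<Longrightarrow> y \<in> D \<Longrightarrow> x \<otimes>\<^bsub>G\<^esub> y = y \<otimes>\<^bsub>G\<^esub> x"
  shows "comm_group G"
proof -
  have G: "group G" and T: "topspace T = carrier G"
    using assms(1) unfolding topological_group_def by auto
  let ?X = "prod_topology T T"
  let ?C = "{z \<in> topspace ?X. fst z \<otimes>\<^bsub>G\<^esub> snd z = snd z \<otimes>\<^bsub>G\<^esub> fst z}"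
  have "continuous_map ?X T (\<lambda>z. fst z \<otimes>\<^bsub>G\<^esub> snd z)" "continuous_map ?X T (\<lambda>z. snd z \<otimes>\<^bsub>G\<^esub> fst z)"
    by (simp_all add: continuous_map_group_mult[OF assms(1)] continuous_map_fst continuous_map_snd)
  then have "closedin ?X ?C"
    by (rule closedin_continuous_maps_eq[OF assms(2)])
  moreover have "D \<times> D \<subseteq> ?C"
    using assms(4,5) T by auto
  ultimately have "?X closure_of (D \<times> D) \<subseteq> ?C"
    by (rule closure_of_minimal[rotated])
  then have "x \<otimes>\<^bsub>G\<^esub> y = y \<otimes>\<^bsub>G\<^esub> x" if "x \<in> carrier G" "y \<in> carrier G" for x y
    using that unfolding closure_of_Times assms(3) T by auto
  then show ?thesis
    using G by (simp add: group.group_comm_groupI)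
qed

lemma closedin_pow_eq_one:
  assumes "topological_group G T" "Hausdorff_space T"
  shows "closedin T {x \<in> carrier G. x [^]\<^bsub>G\<^esub> (n::nat) = \<one>\<^bsub>G\<^esub>}"
proof -
  have T: "topspace T = carrier G"
    using assms(1) unfolding topological_group_def by auto
  have "closedin T {x \<in> topspace T. x [^]\<^bsub>G\<^esub> n \<in> {\<one>\<^bsub>G\<^esub>}}"
    using closedin_Hausdorff_singleton[OF assms(2)] T assms(1)
    by (intro closedin_continuous_map_preimage[OF continuous_map_group_pow])
      (auto simp: topological_group_def group.is_monoid monoid.one_closed)
  then show ?thesis
    by (simp add: T)
qed

lemma closedin_rcos:
  assumes "topological_group G T" "subgroup H G" "closedin T H" "r \<in> carrier G"
  shows "closedin T (H #>\<^bsub>G\<^esub> r)"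
proof -
  interpret subgroup H G by fact
  have G: "group G" and T: "topspace T = carrier G"
    using assms(1) unfolding topological_group_def by auto
  have "closedin T {x \<in> topspace T. x \<otimes>\<^bsub>G\<^esub> inv\<^bsub>G\<^esub> r \<in> H}"
    using G T assms(4)
    by (intro closedin_continuous_map_preimage[OF _ assms(3)]
        continuous_map_group_mult[OF assms(1) continuous_map_id[unfolded id_def]])
      auto
  moreover have "H #>\<^bsub>G\<^esub> r = {x \<in> topspace T. x \<otimes>\<^bsub>G\<^esub> inv\<^bsub>G\<^esub> r \<in> H}"
    using G T assms(4) rcos_module[OF G] elemrcos_carrier[OF G] by blast
  ultimately show ?thesis
    by simp
qed

lemma rcosets_eq_image_if_dense:
  fixes G (structure)
  assumes "topological_group G T" "subgroup H G" "closedin T H"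
    and "T closure_of D = topspace T" "D \<subseteq> carrier G"
    and "finite ((\<lambda>x. H #> x) ` D)"
  shows "rcosets H = (\<lambda>x. H #> x) ` D"
proof
  interpret group G
    using assms(1) unfolding topological_group_def by auto
  have T: "topspace T = carrier G"
    using assms(1) unfolding topological_group_def by auto
  have "closedin T (\<Union>x\<in>D. H #> x)"
    using assms(5,6) closedin_rcos[OF assms(1-3)] by (intro closedin_Union) auto
  moreover have "D \<subseteq> (\<Union>x\<in>D. H #> x)"
    using assms(2,5) rcos_self by blast
  ultimately have "T closure_of D \<subseteq> (\<Union>x\<in>D. H #> x)"
    by (rule closure_of_minimal[rotated])
  then have cover: "carrier G \<subseteq> (\<Union>x\<in>D. H #> x)"
    by (simp add: assms(4) T)
  show "rcosets H \<subseteq> (\<lambda>x. H #> x) ` D"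
  proof
    fix C assume "C \<in> rcosets H"
    then obtain g where g: "g \<in> carrier G" "C = H #> g"
      unfolding RCOSETS_def by auto
    then obtain x where "x \<in> D" "g \<in> H #> x"
      using cover by auto
    moreover from this have "H #> x = H #> g"
      using assms(2,5) by (intro repr_independence) auto
    ultimately show "C \<in> (\<lambda>x. H #> x) ` D"
      using g by auto
  qed
  show "(\<lambda>x. H #> x) ` D \<subseteq> rcosets H"
    using assms(2,5) rcosetsI subgroup.subset by blast
qed

lemma openin_closed_subgroup_finite_index:
  fixes G (structure)
  assumes "topological_group G T" "subgroup H G" "closedin T H" "finite (rcosets H)"
  shows "openin T H"
proof -
  interpret group G
    using assms(1) unfolding topological_group_def by auto
  interpret H: subgroup H G by fact
  have T: "topspace T = carrier G"
    using assms(1) unfolding topological_group_def by auto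
  have "topspace T - H = \<Union>(rcosets H - {H})"
  proof
    show "topspace T - H \<subseteq> \<Union>(rcosets H - {H})"
    proof
      fix x assume "x \<in> topspace T - H"
      moreover from this have "x \<in> H #> x" "H #> x \<in> rcosets H"
        using T assms(2) rcos_self rcosetsI[OF H.subset] by auto
      ultimately show "x \<in> \<Union>(rcosets H - {H})"
        by blast
    qed
    have "H \<in> rcosets H"
      using coset_join2[OF _ assms(2)] rcosetsI[OF H.subset] by (metis one_closed H.one_closed)
    then have "disjnt C H" if "C \<in> rcosets H - {H}" for C
      using that rcos_disjoint[OF assms(2)] by (auto simp: pairwise_def)
    then show "\<Union>(rcosets H - {H}) \<subseteq> topspace T - H"
      using H.rcosets_carrier[OF is_group] T by (auto simp: disjnt_def)
  qed
  moreover have "closedin T (\<Union>(rcosets H - {H}))"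
    using assms(4) closedin_rcos[OF assms(1-3)] by (intro closedin_Union) (auto simp: RCOSETS_def)
  ultimately show ?thesis
    using H.subset T by (simp add: openin_closedin_eq)
qed

lemma (in comm_group) subgroup_pow_eq_one: "subgroup {x \<in> carrier G. x [^] (n::nat) = \<one>} G"
  by (rule subgroupI) (auto simp: nat_pow_distrib nat_pow_inv)

lemma (in comm_group) rcos_pow_eq_one_eqI:
  assumes "x \<in> carrier G" "y \<in> carrier G" "x [^] n = y [^] (n::nat)"
  shows "{z \<in> carrier G. z [^] n = \<one>} #> x = {z \<in> carrier G. z [^] n = \<one>} #> y"
proof -
  have "(x \<otimes> inv y) [^] n = y [^] n \<otimes> inv (y [^] n)"
    using assms by (simp add: nat_pow_distrib nat_pow_inv)
  then have "x \<otimes> inv y \<in> {z \<in> carrier G. z [^] n = \<one>}"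
    using assms(1,2) by simp
  then have "x \<in> {z \<in> carrier G. z [^] n = \<one>} #> y"
    using subgroup.rcos_module_rev[OF subgroup_pow_eq_one is_group assms(2,1)] by simp
  from repr_independence[OF this assms(2) subgroup_pow_eq_one] show ?thesis
    by (rule sym)
qed

lemma finite_image_if_factors:
  assumes "finite (h ` A)" "\<And>x y. x \<in> A \<Longrightarrow> y \<in> A \<Longrightarrow> h x = h y \<Longrightarrow> g x = g y"
  shows "finite (g ` A)"
proof -
  have "g x = g (inv_into A h (h x))" if "x \<in> A" for x
    using that by (intro assms(2)) (simp_all add: inv_into_into f_inv_into_f)
  then have "g ` A \<subseteq> (\<lambda>c. g (inv_into A h c)) ` h ` A"
    by (simp add: image_image image_subset_iff)
  from finite_subset[OF this finite_imageI[OF assms(1)]] show ?thesis .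
qed

definition annihilator_exponent :: "nat \<Rightarrow> nat \<Rightarrow> nat \<Rightarrow> nat" where
  "annihilator_exponent p n N = p ^ (n - 1) * (\<Prod>d\<in>{d\<in>{1..N}. \<not> p dvd d}. d)"

lemma prime_power_dvd_annihilator_exponent_iff:
  fixes p q :: nat
  assumes p: "Factorial_Ring.prime p" and q: "Factorial_Ring.prime q" and "n \<ge> 1" "q ^ k \<le> N"
  shows "q ^ k dvd annihilator_exponent p n N \<longleftrightarrow> \<not> (q = p \<and> n \<le> k)"
proof -
  define m where "m = (\<Prod>d\<in>{d\<in>{1..N}. \<not> p dvd d}. d)"
  have e: "annihilator_exponent p n N = p ^ (n - 1) * m"
    unfolding annihilator_exponent_def m_def ..
  have "\<not> p dvd m"
    unfolding m_def using p by (subst prime_dvd_prod_iff) auto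
  show ?thesis
  proof
    assume dvd: "q ^ k dvd annihilator_exponent p n N"
    show "\<not> (q = p \<and> n \<le> k)"
    proof
      assume "q = p \<and> n \<le> k"
      then have "p ^ n dvd q ^ k"
        by (simp add: le_imp_power_dvd)
      moreover have "p ^ n = p ^ (n - 1) * p"
        using \<open>n \<ge> 1\<close> by (simp flip: power_Suc2)
      ultimately have "p ^ (n - 1) * p dvd p ^ (n - 1) * m"
        using dvd e by (metis dvd_trans)
      then show False
        using \<open>\<not> p dvd m\<close> p by (simp add: prime_gt_0_nat)
    qed
  next
    assume "\<not> (q = p \<and> n \<le> k)"
    then consider "q \<noteq> p" | "q = p" "k \<le> n - 1"
      by linarith
    then show "q ^ k dvd annihilator_exponent p n N"
    proof cases
      case 1
      have "\<not> p dvd q ^ k"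
        using 1 p q prime_dvd_power primes_dvd_imp_eq by blast
      moreover have "q ^ k \<ge> 1"
        using q prime_gt_0_nat by (simp add: Suc_le_eq)
      ultimately have "q ^ k dvd m"
        unfolding m_def using \<open>q ^ k \<le> N\<close> by (intro dvd_prodI) auto
      then show ?thesis
        unfolding e by simp
    next
      case 2
      then show ?thesis
        unfolding e by (simp add: le_imp_power_dvd dvd_mult2)
    qed
  qed
qed

lemma (in comm_monoid) finprod_nat_pow:
  assumes "finite A" "g \<in> A \<rightarrow> carrier G"
  shows "(finprod G g A) [^] (n::nat) = finprod G (\<lambda>i. g i [^] n) A"
  using assms
proof (induction A rule: finite_induct)
  case (insert a A)
  then show ?case
    by (simp add: nat_pow_distrib Pi_def)
qed simp

lemma (in comm_group) finite_pow_image_if_pruefer: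
  assumes "pruefer_decomposition G B" "finite F" "F \<subseteq> B"
    and "\<And>b. b \<in> B - F \<Longrightarrow> b [^] (e::nat) = \<one>"
  shows "finite ((\<lambda>x. x [^] e) ` carrier G)"
proof -
  have B: "B \<subseteq> carrier G"
    using assms(1) unfolding pruefer_decomposition_def by blast
  let ?P = "\<lambda>c. finprod G (\<lambda>b. (b [^] c b) [^] e) F"
  have "(\<lambda>x. x [^] e) ` carrier G \<subseteq> ?P ` PiE F (\<lambda>b. {..<ord b})"
  proof (rule image_subsetI)
    fix x assume "x \<in> carrier G"
    then obtain a where a: "\<forall>b. b \<notin> B \<longrightarrow> a b = 0" "\<forall>b\<in>B. a b < ord b" "finite {b. a b \<noteq> 0}"
      "x = finprod G (\<lambda>b. b [^] a b) {b. a b \<noteq> 0}"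
      using assms(1) unfolding pruefer_decomposition_def by blast
    define S where "S = {b. a b \<noteq> 0}"
    have "S \<subseteq> B"
      using a(1) unfolding S_def by auto
    have "x [^] e = finprod G (\<lambda>b. (b [^] a b) [^] e) S"
      unfolding a(4) S_def using \<open>S \<subseteq> B\<close> B
      by (intro finprod_nat_pow[OF a(3)]) (auto simp: S_def)
    also have "\<dots> = ?P (restrict a F)"
    proof (rule finprod_mono_neutral_cong)
      show "(b [^] a b) [^] e = \<one>" if "b \<in> S - F" for b
      proof -
        have "b \<in> carrier G" "b [^] e = \<one>"
          using that \<open>S \<subseteq> B\<close> B assms(4) by auto
        have "(b [^] a b) [^] e = (b [^] e) [^] a b"
          using \<open>b \<in> carrier G\<close> by (simp add: nat_pow_pow mult.commute)
        with \<open>b [^] e = \<one>\<close> show ?thesis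
          by simp
      qed
      show "(b [^] restrict a F b) [^] e = \<one>" if "b \<in> F - S" for b
        using that unfolding S_def by simp
      show "(b [^] a b) [^] e = (b [^] restrict a F b) [^] e" if "b \<in> S \<inter> F" for b
        using that by simp
      show "(\<lambda>b. (b [^] a b) [^] e) \<in> S \<rightarrow> carrier G"
        using \<open>S \<subseteq> B\<close> B by auto
      show "(\<lambda>b. (b [^] restrict a F b) [^] e) \<in> F \<rightarrow> carrier G"
        using assms(3) B by auto
    qed (use a(3) assms(2) in \<open>simp_all add: S_def\<close>)
    finally have "x [^] e = ?P (restrict a F)" .
    moreover have "restrict a F \<in> PiE F (\<lambda>b. {..<ord b})"
      using a(2) assms(3) by auto
    ultimately show "x [^] e \<in> ?P ` PiE F (\<lambda>b. {..<ord b})"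
      by (rule image_eqI)
  qed
  then show ?thesis
    by (rule finite_subset) (simp add: assms(2) finite_PiE)
qed

lemma (in group) bounded_group_ord_le:
  assumes "bounded_group G"
  obtains N where "\<And>x. x \<in> carrier G \<Longrightarrow> ord x \<le> N"
proof -
  obtain N :: nat where N: "\<forall>x\<in>carrier G. \<exists>m::nat. 0 < m \<and> m \<le> N \<and> x [^] m = \<one>"
    using assms unfolding bounded_group_def by auto
  have "ord x \<le> N" if "x \<in> carrier G" for x
  proof -
    from N that obtain m :: nat where "0 < m" "m \<le> N" "x [^] m = \<one>"
      by auto
    then show "ord x \<le> N"
      using pow_eq_id[OF that] by (auto dest: dvd_imp_le)
  qed
  then show ?thesis
    by (rule that)
qed

lemma not_property_star_witness:
  fixes \<Gamma> :: "('g, 'c) monoid_scheme"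
  assumes "\<not> property_star \<Gamma>"
  obtains B p n b where "pruefer_decomposition \<Gamma> B" "Factorial_Ring.prime (p::nat)" "n \<ge> 1"
    "b \<in> B" "group.ord \<Gamma> b = p ^ n" "\<And>k. k \<ge> n \<Longrightarrow> finite {b\<in>B. group.ord \<Gamma> b = p ^ k}"
proof -
  from assms obtain B p n where "pruefer_decomposition \<Gamma> B" "Factorial_Ring.prime (p::nat)" "n \<ge> 1"
    and pos: "summand_mult \<Gamma> B (p ^ n) > 0"
    and fin: "\<forall>k\<ge>n. summand_mult \<Gamma> B (p ^ k) \<noteq> \<infinity>"
    unfolding property_star_def by auto
  moreover have "{b\<in>B. group.ord \<Gamma> b = p ^ n} \<noteq> {}"
    using pos unfolding summand_mult_def by (force simp: Let_def zero_enat_def split: if_splits)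
  moreover have "finite {b\<in>B. group.ord \<Gamma> b = p ^ k}" if "k \<ge> n" for k
    using fin that unfolding summand_mult_def by (auto simp: Let_def split: if_splits)
  ultimately show ?thesis
    using that by blast
qed

lemma (in comm_group) exponent_with_finite_pow_image:
  assumes "bounded_group G" "\<not> property_star G"
  obtains e :: nat and b where "b \<in> carrier G" "b [^] e \<noteq> \<one>"
    "finite ((\<lambda>x. x [^] e) ` carrier G)"
proof -
  obtain B p n b0 where dec: "pruefer_decomposition G B" and p: "Factorial_Ring.prime p"
    and "n \<ge> 1" "b0 \<in> B" "ord b0 = p ^ n"
    and fin: "\<And>k. k \<ge> n \<Longrightarrow> finite {b\<in>B. ord b = p ^ k}"
    using not_property_star_witness[OF assms(2)] by blast
  obtain N where N: "\<And>x. x \<in> carrier G \<Longrightarrow> ord x \<le> N"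
    using bounded_group_ord_le[OF assms(1)] by blast
  have B: "B \<subseteq> carrier G"
    and prime_power: "\<And>b. b \<in> B \<Longrightarrow> \<exists>q k. Factorial_Ring.prime (q::nat) \<and> ord b = q ^ k"
    using dec unfolding pruefer_decomposition_def by blast+
  define e where "e = annihilator_exponent p n N"
  have kill: "b [^] e = \<one> \<longleftrightarrow> \<not> (q = p \<and> n \<le> k)"
    if "b \<in> B" "Factorial_Ring.prime q" "ord b = q ^ k" for b q k
    using that B N prime_power_dvd_annihilator_exponent_iff[OF p _ \<open>n \<ge> 1\<close>] pow_eq_id
    unfolding e_def by (metis subsetD)
  define F where "F = {b\<in>B. b [^] e \<noteq> \<one>}"
  have "F \<subseteq> (\<Union>k\<in>{n..N}. {b\<in>B. ord b = p ^ k})"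
  proof
    fix b assume "b \<in> F"
    then obtain q k where "b \<in> B" "Factorial_Ring.prime q" "ord b = q ^ k" "b [^] e \<noteq> \<one>"
      using prime_power unfolding F_def by blast
    moreover have "k < q ^ k"
    proof -
      have "k < 2 ^ k"
        by (rule less_exp)
      also have "\<dots> \<le> q ^ k"
        using prime_ge_2_nat[OF \<open>Factorial_Ring.prime q\<close>] by (simp add: power_mono)
      finally show ?thesis .
    qed
    moreover have "q ^ k \<le> N"
      using N B \<open>b \<in> B\<close> \<open>ord b = q ^ k\<close> by (metis subsetD)
    ultimately have "q = p" "n \<le> k" "k \<le> N"
      using kill by auto
    then show "b \<in> (\<Union>k\<in>{n..N}. {b\<in>B. ord b = p ^ k})"
      using \<open>b \<in> B\<close> \<open>ord b = q ^ k\<close> by auto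
  qed
  then have "finite F"
    by (rule finite_subset) (use fin in auto)
  then have "finite ((\<lambda>x. x [^] e) ` carrier G)"
    by (intro finite_pow_image_if_pruefer[OF dec]) (auto simp: F_def)
  moreover have "b0 [^] e \<noteq> \<one>"
    using kill[OF \<open>b0 \<in> B\<close> p \<open>ord b0 = p ^ n\<close>] by simp
  ultimately show ?thesis
    using that B \<open>b0 \<in> B\<close> by blast
qed

theorem proposition2p1:
  fixes \<Gamma> :: "('g, 'c) monoid_scheme" and G :: "('a, 'b) monoid_scheme" and T :: "'a topology"
  assumes "comm_group \<Gamma>" and "countable (carrier \<Gamma>)" and "bounded_group \<Gamma>"
    and "\<not> property_star \<Gamma>"
    and "topological_group G T" and "Hausdorff_space T"
    and "f \<in> hom \<Gamma> G" and "inj_on f (carrier \<Gamma>)"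
    and "T closure_of (f ` carrier \<Gamma>) = topspace T"
  shows "\<exists>H. subgroup H G \<and> openin T H \<and> H \<noteq> carrier G \<and> finite (rcosets\<^bsub>G\<^esub> H)"
proof -
  \<comment> \<open>Countability is only needed for Pruefer's theorem; here the failure of \<open>(*)\<close> already
    provides a decomposition.\<close>
  interpret \<Gamma>: comm_group \<Gamma> by fact
  interpret G: group G
    using assms(5) unfolding topological_group_def by auto
  interpret f: group_hom \<Gamma> G f
    using assms(7) by unfold_locales
  obtain e :: nat and b where b: "b \<in> carrier \<Gamma>" "b [^]\<^bsub>\<Gamma>\<^esub> e \<noteq> \<one>\<^bsub>\<Gamma>\<^esub>"
    and fin: "finite ((\<lambda>x. x [^]\<^bsub>\<Gamma>\<^esub> e) ` carrier \<Gamma>)"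
    using \<Gamma>.exponent_with_finite_pow_image[OF assms(3,4)] by blast
  have D: "f ` carrier \<Gamma> \<subseteq> carrier G"
    by auto
  have "f x \<otimes>\<^bsub>G\<^esub> f y = f y \<otimes>\<^bsub>G\<^esub> f x" if "x \<in> carrier \<Gamma>" "y \<in> carrier \<Gamma>" for x y
    using that \<Gamma>.m_comm by (simp flip: f.hom_mult)
  then interpret G: comm_group G
    using comm_group_if_dense_commuting[OF assms(5,6,9) D] by blast
  define H where "H = {x \<in> carrier G. x [^]\<^bsub>G\<^esub> e = \<one>\<^bsub>G\<^esub>}"
  have H: "subgroup H G" "closedin T H"
    unfolding H_def using G.subgroup_pow_eq_one closedin_pow_eq_one[OF assms(5,6)] by auto
  have "H #>\<^bsub>G\<^esub> f x = H #>\<^bsub>G\<^esub> f y"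
    if "x \<in> carrier \<Gamma>" "y \<in> carrier \<Gamma>" "x [^]\<^bsub>\<Gamma>\<^esub> e = y [^]\<^bsub>\<Gamma>\<^esub> e" for x y
    unfolding H_def using that by (intro G.rcos_pow_eq_one_eqI) (auto simp flip: f.hom_nat_pow)
  then have "finite ((\<lambda>x. H #>\<^bsub>G\<^esub> x) ` f ` carrier \<Gamma>)"
    unfolding image_image by (rule finite_image_if_factors[OF fin])
  then have "finite (rcosets\<^bsub>G\<^esub> H)"
    using rcosets_eq_image_if_dense[OF assms(5) H assms(9) D] by simp
  moreover from this have "openin T H"
    by (rule openin_closed_subgroup_finite_index[OF assms(5) H])
  moreover have "f b \<notin> H"
  proof
    assume "f b \<in> H"
    then have "f (b [^]\<^bsub>\<Gamma>\<^esub> e) = f \<one>\<^bsub>\<Gamma>\<^esub>"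
      unfolding H_def using b(1) by (simp add: f.hom_nat_pow)
    then have "b [^]\<^bsub>\<Gamma>\<^esub> e = \<one>\<^bsub>\<Gamma>\<^esub>"
      by (rule inj_onD[OF assms(8)]) (simp_all add: b(1))
    with b(2) show False ..
  qed
  then have "H \<noteq> carrier G"
    using b(1) by auto
  ultimately show ?thesis
    using H(1) by blast
qed

end
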